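(* Let $0<\alpha<1$, $0\le\rho<1-(1+\alpha)^{-1/2}$, $\gamma=(1+\alpha)(1-\rho)^2-1$, $\sigma=(1-\rho)(2-\rho)^{-1}$, and let $\ell$ be a positive integer with $\ell\ge 4\gamma^{-1}$. Let $\mathcal{C}\subseteq[q]^n$ be a code and $S\subseteq[n]$ with $|S|=m$. If $\mathcal{C}_S$ is not $(\rho,\ell,\ell(1+\alpha))$-list recoverable, then there is a set $\mathcal{C}'\subseteq\mathcal{C}_S$ with $|\mathcal{C}'|\le 10\sqrt{\ell/\gamma}$ and $|T_S(\mathcal{C}')|\ge\sigma m/4$.
   Context: For $S\subseteq[n]$, $\mathcal{C}_S\subseteq[q]^S$ denotes the puncturing of $\mathcal{C}$ to $S$ (restriction of each codeword to coordinates in $S$). A code $\mathcal{D}\subseteq[q]^S$ is $(\rho,\ell,L)$-list recoverable if for all sets $A_i\subseteq[q]$ ($i\in S$) with $|A_i|\le\ell$, at most $L$ codewords $c\in\mathcal{D}$ differ from $\prod_{i\in S}A_i$ in at most $\rho|S|$ coordinates (i.e. have $c[i]\notin A_i$ for at most $\rho|S|$ indices $i\in S$). For $\mathcal{C}'\subseteq\mathcal{C}_S$, $T_S(\mathcal{C}')$ is the set of coordinates $i\in S$ for which there exist two distinct $c_1,c_2\in\mathcal{C}'$ with $c_1[i]=c_2[i]$. *)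

theory Defs
  imports "HOL-Library.FuncSet" Complex_Main
begin

text \<open>Words of length n over [q] are extensional functions in
  PiE {..<n} (\<lambda>_. {..<q}); so [n] = {0..<n}, [q] = {0..<q}.\<close>

definition code :: "nat \<Rightarrow> nat \<Rightarrow> (nat \<Rightarrow> nat) set \<Rightarrow> bool" where
  "code q n C \<longleftrightarrow> C \<subseteq> PiE {..<n} (\<lambda>_. {..<q})"

definition puncture :: "(nat \<Rightarrow> nat) set \<Rightarrow> nat set \<Rightarrow> (nat \<Rightarrow> nat) set" where
  "puncture C S = (\<lambda>c. restrict c S) ` C"

definition list_recoverable ::
  "nat \<Rightarrow> nat set \<Rightarrow> (nat \<Rightarrow> nat) set \<Rightarrow> real \<Rightarrow> nat \<Rightarrow> real \<Rightarrow> bool" where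
  "list_recoverable q S D \<rho> l L \<longleftrightarrow>
     (\<forall>A :: nat \<Rightarrow> nat set. (\<forall>i\<in>S. A i \<subseteq> {..<q} \<and> card (A i) \<le> l) \<longrightarrow>
        real (card {c \<in> D. real (card {i \<in> S. c i \<notin> A i}) \<le> \<rho> * real (card S)}) \<le> L)"

definition T_set :: "nat set \<Rightarrow> (nat \<Rightarrow> nat) set \<Rightarrow> nat set" where
  "T_set S C' = {i \<in> S. \<exists>c1\<in>C'. \<exists>c2\<in>C'. c1 \<noteq> c2 \<and> c1 i = c2 i}"

end

theory Submission
  imports Defs
begin

text \<open>Non-recoverability provides lists \<open>A i\<close> of size at most \<open>l\<close> and a set \<open>E\<close> of between
  \<open>(1 + \<alpha>) l\<close> and \<open>2 l\<close> codewords, each agreeing with the lists on all but \<open>\<rho> m\<close> coordinates.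
  By averaging, on at least \<open>\<sigma> m\<close> coordinates \<open>i\<close> at least \<open>(1 - \<rho>)\<^sup>2 |E|\<close> codewords agree
  with \<open>A i\<close>; since only \<open>|A i| \<le> l\<close> of them can take distinct values there, they contain
  more than \<open>\<gamma> l / 2\<close> disjoint pairs colliding at \<open>i\<close>. A uniformly random \<open>k\<close>-subset of \<open>E\<close>,
  \<open>k \<approx> 2 sqrt (l / \<gamma>)\<close>, contains a fixed pair with probability \<open>p = k(k-1) / (|E|(|E|-1))\<close>, and by
  second-order inclusion-exclusion over about \<open>1 / (2p)\<close> of these pairs it contains one of
  them with probability at least \<open>1/4\<close>. Averaging over all \<open>k\<close>-subsets gives the required \<open>C'\<close>.\<close>

section \<open>Matchings of colliding pairs\<close>

definition collision_matching :: "('a \<Rightarrow> 'b) \<Rightarrow> 'a set \<Rightarrow> 'a set set \<Rightarrow> bool" where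
  "collision_matching h D M \<longleftrightarrow> finite M \<and> pairwise disjnt M \<and>
     (\<forall>e\<in>M. e \<subseteq> D \<and> (\<exists>x y. e = {x, y} \<and> x \<noteq> y \<and> h x = h y))"

lemma collision_matching_memE:
  assumes "collision_matching h D M" "e \<in> M"
  obtains x y where "e = {x, y}" "{x, y} \<subseteq> D" "x \<noteq> y" "h x = h y"
proof -
  have "e \<subseteq> D \<and> (\<exists>x y. e = {x, y} \<and> x \<noteq> y \<and> h x = h y)"
    using assms by (simp add: collision_matching_def)
  then obtain x y where "e \<subseteq> D" "e = {x, y}" "x \<noteq> y" "h x = h y"
    by blast
  then show thesis
    using that[of x y] by simp
qed

lemma collision_matching_exists:
  assumes "finite D" "finite B"
  shows "\<exists>M. collision_matching h D M \<and> card {x\<in>D. h x \<in> B} \<le> 2 * card M + card B"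
  using assms(1)
proof (induction "card {x\<in>D. h x \<in> B}" arbitrary: D rule: less_induct)
  case less
  let ?F = "\<lambda>D. {x\<in>D. h x \<in> B}"
  show ?case
  proof (cases "inj_on h (?F D)")
    case True
    then have "card (?F D) = card (h ` ?F D)"
      by (simp add: card_image)
    also have "\<dots> \<le> card B"
      using assms(2) by (intro card_mono) auto
    finally show ?thesis
      by (intro exI[of _ "{}"]) (simp add: collision_matching_def)
  next
    case False
    then obtain x y where xy: "x \<in> ?F D" "y \<in> ?F D" "x \<noteq> y" "h x = h y"
      unfolding inj_on_def by auto
    define D' where "D' = D - {x, y}"
    have "?F D' = ?F D - {x, y}"
      unfolding D'_def by blast
    moreover have "card {x, y} \<le> card (?F D)"
      using xy less.prems by (intro card_mono) auto
    ultimately have card_F: "card (?F D) = card (?F D') + 2"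
      using xy less.prems by (simp add: card_Diff_subset)
    obtain M' where M': "collision_matching h D' M'" "card (?F D') \<le> 2 * card M' + card B"
      using less.hyps[of D'] less.prems card_F unfolding D'_def by auto
    have "\<forall>e\<in>M'. e \<subseteq> D'"
      using M'(1) unfolding collision_matching_def by blast
    then have disjoint_new: "\<forall>e\<in>M'. disjnt e {x, y}"
      unfolding D'_def disjnt_def by blast
    then have "{x, y} \<notin> M'"
      by (metis disjnt_self_iff_empty insert_not_empty)
    moreover have "collision_matching h D (insert {x, y} M')"
      using M'(1) disjoint_new xy disjnt_sym
      unfolding collision_matching_def pairwise_insert D'_def by blast
    ultimately show ?thesis
      using M' card_F unfolding collision_matching_def
      by (intro exI[of _ "insert {x, y} M'"]) simp
  qed
qed

lemma exists_large_collision_matching: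
  assumes "finite D" "finite B" "card B \<le> l" "(1 + \<gamma>) * real l < real (card {x\<in>D. h x \<in> B})"
  shows "\<exists>M. collision_matching h D M \<and> \<gamma> * real l < 2 * real (card M)"
proof -
  obtain M where M: "collision_matching h D M" "card {x\<in>D. h x \<in> B} \<le> 2 * card M + card B"
    using collision_matching_exists[OF assms(1,2)] by blast
  have "(1 + \<gamma>) * real l = real l + \<gamma> * real l"
    by (simp add: algebra_simps)
  then have "\<gamma> * real l < 2 * real (card M)"
    using M(2) assms(3,4) by linarith
  then show ?thesis
    using M(1) by blast
qed

section \<open>Random subsets containing a pair\<close>

lemma card_UN_ge_bonferroni:
  fixes A :: "'i \<Rightarrow> 'x set"
  assumes "finite J" "\<forall>j\<in>J. finite (A j)" "\<forall>j\<in>J. a \<le> real (card (A j))"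
    "\<forall>j\<in>J. \<forall>j'\<in>J. j \<noteq> j' \<longrightarrow> real (card (A j \<inter> A j')) \<le> b"
  shows "real (card J) * a - real (card J) * (real (card J) - 1) / 2 * b \<le> real (card (\<Union>j\<in>J. A j))"
  using assms
proof (induction J rule: finite_induct)
  case empty
  then show ?case by simp
next
  case (insert j J)
  let ?U = "\<Union>j\<in>J. A j"
  have IH: "real (card J) * a - real (card J) * (real (card J) - 1) / 2 * b \<le> real (card ?U)"
    using insert.IH insert.prems by blast
  have "card (A j \<inter> ?U) \<le> (\<Sum>j'\<in>J. card (A j \<inter> A j'))"
    unfolding Int_UN_distrib using insert.hyps(1) by (rule card_UN_le)
  then have "real (card (A j \<inter> ?U)) \<le> (\<Sum>j'\<in>J. real (card (A j \<inter> A j')))"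
    by (metis of_nat_le_iff of_nat_sum)
  also have "\<dots> \<le> (\<Sum>j'\<in>J. b)"
    using insert.prems(3) insert.hyps(2) by (intro sum_mono) auto
  finally have overlap: "real (card (A j \<inter> ?U)) \<le> real (card J) * b"
    by simp
  have "card (A j) + card ?U = card (A j \<union> ?U) + card (A j \<inter> ?U)"
    using insert.hyps(1) insert.prems(1) by (intro card_Un_Int) auto
  moreover have "(\<Union>j\<in>insert j J. A j) = A j \<union> ?U"
    by simp
  ultimately have union: "real (card (\<Union>j\<in>insert j J. A j)) = real (card (A j)) + real (card ?U) - real (card (A j \<inter> ?U))"
    by (metis add_diff_cancel_right' of_nat_add)
  have card_insert: "real (card (insert j J)) = real (card J) + 1"
    using insert.hyps by simp
  have "(real (card J) + 1) * a - (real (card J) + 1) * (real (card J) + 1 - 1) / 2 * b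
      = (real (card J) * a - real (card J) * (real (card J) - 1) / 2 * b) + a - real (card J) * b"
    by (simp add: algebra_simps add_divide_distrib diff_divide_distrib)
  moreover have "a \<le> real (card (A j))"
    using insert.prems(2) by simp
  ultimately show ?case
    unfolding union card_insert using IH overlap by linarith
qed

lemma card_supersets_eq_choose:
  assumes "finite D" "F \<subseteq> D" "card F \<le> k"
  shows "card {X. X \<subseteq> D \<and> card X = k \<and> F \<subseteq> X} = (card D - card F) choose (k - card F)"
proof -
  have finite_F: "finite F"
    using assms finite_subset by auto
  have "bij_betw (\<lambda>Y. Y \<union> F) {Y. Y \<subseteq> D - F \<and> card Y = k - card F} {X. X \<subseteq> D \<and> card X = k \<and> F \<subseteq> X}"
  proof (rule bij_betw_byWitness[where f' = "\<lambda>X. X - F"])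
    show "(\<lambda>Y. Y \<union> F) ` {Y. Y \<subseteq> D - F \<and> card Y = k - card F} \<subseteq> {X. X \<subseteq> D \<and> card X = k \<and> F \<subseteq> X}"
    proof clarify
      fix Y assume Y: "Y \<subseteq> D - F" "card Y = k - card F"
      moreover have "finite Y" "Y \<inter> F = {}" "Y \<subseteq> D"
        using Y assms(1) finite_subset by blast+
      ultimately show "Y \<union> F \<subseteq> D \<and> card (Y \<union> F) = k \<and> F \<subseteq> Y \<union> F"
        using assms finite_F by (simp add: card_Un_disjoint)
    qed
  qed (use finite_F in \<open>auto simp: card_Diff_subset\<close>)
  then have "card {X. X \<subseteq> D \<and> card X = k \<and> F \<subseteq> X} = card (D - F) choose (k - card F)"
    using assms(1) by (simp add: bij_betw_same_card[symmetric] n_subsets)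
  then show ?thesis
    using assms(2) finite_F by (simp add: card_Diff_subset)
qed

text \<open>The probability that a uniformly random \<open>k\<close>-subset of an \<open>n\<close>-set contains a fixed pair.\<close>

definition pair_prob :: "nat \<Rightarrow> nat \<Rightarrow> real" where
  "pair_prob n k = real k * (real k - 1) / (real n * (real n - 1))"

lemma pair_prob_pos_le:
  assumes "2 \<le> k" "k \<le> n"
  shows "0 < pair_prob n k" "pair_prob n k \<le> 1"
proof -
  have "real k * (real k - 1) \<le> real n * (real n - 1)"
    using assms by (intro mult_mono) auto
  moreover have "0 < real k * (real k - 1)"
    using assms(1) by simp
  ultimately show "0 < pair_prob n k" "pair_prob n k \<le> 1"
    unfolding pair_prob_def by simp_all
qed

lemma choose_diff_two_eq:
  assumes "2 \<le> k" "k \<le> n"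
  shows "real ((n - 2) choose (k - 2)) = pair_prob n k * real (n choose k)"
proof -
  have "real k * real (n choose k) = real n * real ((n - 1) choose (k - 1))"
    using times_binomial_minus1_eq[of k n] assms by (metis of_nat_mult not_numeral_le_zero gr0I)
  moreover have "real (k - 1) * real ((n - 1) choose (k - 1)) = real (n - 1) * real ((n - 1 - 1) choose (k - 1 - 1))"
    using times_binomial_minus1_eq[of "k - 1" "n - 1"] assms
    by (metis of_nat_mult zero_less_diff Suc_1 Suc_le_eq order_less_le_trans)
  moreover have "real (k - 1) = real k - 1" "real (n - 1) = real n - 1" "n - 1 - 1 = n - 2" "k - 1 - 1 = k - 2"
    using assms by (simp_all add: of_nat_diff)
  ultimately have "real n * (real n - 1) * real ((n - 2) choose (k - 2)) = real k * (real k - 1) * real (n choose k)"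
    by (metis mult.assoc mult.commute)
  moreover have "real n * (real n - 1) \<noteq> 0"
    using assms by simp
  ultimately have "real ((n - 2) choose (k - 2)) = real k * (real k - 1) * real (n choose k) / (real n * (real n - 1))"
    by (metis nonzero_mult_div_cancel_left)
  then show ?thesis
    unfolding pair_prob_def by (metis times_divide_eq_left)
qed

lemma diff_ratio_le_ratio:
  fixes a b j :: real
  assumes "0 \<le> j" "a \<le> b" "j < b"
  shows "(a - j) / (b - j) \<le> a / b"
  using assms by (simp add: field_simps mult_right_mono)

lemma choose_diff_four_le:
  assumes "4 \<le> k" "k \<le> n"
  shows "real ((n - 4) choose (k - 4)) \<le> (pair_prob n k)^2 * real (n choose k)"
proof -
  have "real ((n - 4) choose (k - 4)) = pair_prob (n - 2) (k - 2) * real ((n - 2) choose (k - 2))"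
    using choose_diff_two_eq[of "k - 2" "n - 2"] assms by (simp add: numeral_eq_Suc)
  also have "pair_prob (n - 2) (k - 2) = (real k - 2) / (real n - 2) * ((real k - 3) / (real n - 3))"
    unfolding pair_prob_def using assms by (simp add: of_nat_diff)
  also have "\<dots> \<le> real k / real n * ((real k - 1) / (real n - 1))"
  proof (rule mult_mono)
    show "(real k - 2) / (real n - 2) \<le> real k / real n"
      using diff_ratio_le_ratio[of 2 "real k" "real n"] assms by simp
    show "(real k - 3) / (real n - 3) \<le> (real k - 1) / (real n - 1)"
      using diff_ratio_le_ratio[of 2 "real k - 1" "real n - 1"] assms by simp
  qed (use assms in simp_all)
  also have "\<dots> = pair_prob n k"
    unfolding pair_prob_def by simp
  finally have "real ((n - 4) choose (k - 4)) \<le> pair_prob n k * real ((n - 2) choose (k - 2))"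
    by (simp add: mult_right_mono)
  also have "\<dots> = (pair_prob n k)^2 * real (n choose k)"
    using assms choose_diff_two_eq[of k n] by (simp add: power2_eq_square)
  finally show ?thesis .
qed

lemma card_subsets_containing_pair_bonferroni:
  assumes "finite D" "4 \<le> k" "k \<le> card D"
    and "finite M" "pairwise disjnt M" "\<forall>e\<in>M. e \<subseteq> D \<and> card e = 2"
  defines "y \<equiv> real (card M) * pair_prob (card D) k"
  shows "(y - y^2 / 2) * real (card D choose k) \<le> real (card {X. X \<subseteq> D \<and> card X = k \<and> (\<exists>e\<in>M. e \<subseteq> X)})"
proof -
  define p where "p = pair_prob (card D) k"
  define CK where "CK = real (card D choose k)"
  define Sup where "Sup e = {X. X \<subseteq> D \<and> card X = k \<and> e \<subseteq> X}" for e
  have card_Sup: "real (card (Sup e)) = p * CK" if "e \<in> M" for e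
  proof -
    have "card (Sup e) = (card D - 2) choose (k - 2)"
      unfolding Sup_def using that assms(6) card_supersets_eq_choose[OF assms(1)] assms(2) by simp
    then show ?thesis
      unfolding p_def CK_def using choose_diff_two_eq[of k "card D"] assms(2,3) by simp
  qed
  have card_Sup_Int: "real (card (Sup e \<inter> Sup e')) \<le> p^2 * CK"
    if "e \<in> M" "e' \<in> M" "e \<noteq> e'" for e e'
  proof -
    have "e \<subseteq> D" "card e = 2" "e' \<subseteq> D" "card e' = 2"
      using that assms(6) by auto
    moreover have "disjnt e e'"
      using that assms(5) unfolding pairwise_def by blast
    ultimately have union: "e \<union> e' \<subseteq> D" "card (e \<union> e') = 4"
      by (auto simp: card_Un_disjoint disjnt_def card_ge_0_finite)
    have "card (Sup e \<inter> Sup e') = card {X. X \<subseteq> D \<and> card X = k \<and> e \<union> e' \<subseteq> X}"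
      unfolding Sup_def by (rule arg_cong[where f = card]) blast
    also have "\<dots> = (card D - 4) choose (k - 4)"
      using card_supersets_eq_choose[OF assms(1) union(1), of k] union(2) assms(2) by simp
    finally show ?thesis
      unfolding p_def CK_def using choose_diff_four_le[of k "card D"] assms(2,3) by simp
  qed
  have "\<forall>e\<in>M. finite (Sup e)"
    unfolding Sup_def using assms(1) by simp
  then have "real (card M) * (p * CK) - real (card M) * (real (card M) - 1) / 2 * (p^2 * CK)
      \<le> real (card (\<Union>e\<in>M. Sup e))"
    using card_UN_ge_bonferroni[of M Sup "p * CK" "p^2 * CK"] assms(4) card_Sup card_Sup_Int by simp
  moreover have "0 \<le> real (card M) * p^2 * CK"
    unfolding CK_def by simp
  then have "(y - y^2 / 2) * CK \<le> real (card M) * (p * CK) - real (card M) * (real (card M) - 1) / 2 * (p^2 * CK)"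
    unfolding y_def p_def[symmetric] by (simp add: power2_eq_square algebra_simps)
  moreover have "card (\<Union>e\<in>M. Sup e) \<le> card {X. X \<subseteq> D \<and> card X = k \<and> (\<exists>e\<in>M. e \<subseteq> X)}"
    using assms(1) unfolding Sup_def by (intro card_mono) auto
  ultimately show ?thesis
    unfolding CK_def by linarith
qed

lemma exists_subset_card_mult_between:
  fixes p :: real
  assumes "0 < p" "p \<le> 1" "1 / 2 \<le> real (card M) * p"
  obtains M0 where "M0 \<subseteq> M" "1 / 2 \<le> real (card M0) * p" "real (card M0) * p \<le> 3 / 2"
proof -
  define r where "r = nat \<lceil>1 / (2 * p)\<rceil>"
  have "real r = of_int \<lceil>1 / (2 * p)\<rceil>"
    unfolding r_def using assms(1) by simp
  then have "1 / (2 * p) \<le> real r" "real r < 1 / (2 * p) + 1"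
    using ceiling_correct[of "1 / (2 * p)"] by linarith+
  then have "1 / 2 \<le> real r * p" "real r * p \<le> 3 / 2"
    using assms(1,2) by (simp_all add: field_simps)
  moreover have "r \<le> card M"
    using assms unfolding r_def by (simp add: nat_le_iff ceiling_le_iff field_simps)
  then obtain M0 where "M0 \<subseteq> M" "card M0 = r"
    by (meson obtain_subset_with_card_n)
  ultimately show thesis
    using that by blast
qed

text \<open>The Bonferroni bound \<open>y - y\<^sup>2/2\<close> is only useful for \<open>y\<close> near \<open>1\<close>,
  so \<open>M\<close> is first thinned out to about \<open>1 / (2p)\<close> pairs.\<close>

lemma card_subsets_containing_pair_ge:
  assumes "finite D" "4 \<le> k" "k \<le> card D"
    and "finite M" "pairwise disjnt M" "\<forall>e\<in>M. e \<subseteq> D \<and> card e = 2"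
    and "1 / 2 \<le> real (card M) * pair_prob (card D) k"
  shows "real (card D choose k) \<le> 4 * real (card {X. X \<subseteq> D \<and> card X = k \<and> (\<exists>e\<in>M. e \<subseteq> X)})"
proof -
  obtain M0 where M0: "M0 \<subseteq> M" and y: "1 / 2 \<le> real (card M0) * pair_prob (card D) k"
    "real (card M0) * pair_prob (card D) k \<le> 3 / 2"
    using exists_subset_card_mult_between[OF pair_prob_pos_le[of k "card D"] assms(7)] assms(2,3) by auto
  define y where "y = real (card M0) * pair_prob (card D) k"
  have "0 \<le> (y - 1 / 2) * (3 / 2 - y)"
    using y unfolding y_def by (intro mult_nonneg_nonneg) auto
  moreover have "(y - 1 / 2) * (3 / 2 - y) = 2 * (y - y^2 / 2 - 3 / 8)"
    by (simp add: power2_eq_square field_simps)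
  ultimately have "3 / 8 * real (card D choose k) \<le> (y - y^2 / 2) * real (card D choose k)"
    by (intro mult_right_mono) auto
  also have "\<dots> \<le> real (card {X. X \<subseteq> D \<and> card X = k \<and> (\<exists>e\<in>M0. e \<subseteq> X)})"
    unfolding y_def using card_subsets_containing_pair_bonferroni[OF assms(1-3), of M0] M0 assms(4-6)
    by (auto intro: finite_subset pairwise_subset)
  also have "\<dots> \<le> real (card {X. X \<subseteq> D \<and> card X = k \<and> (\<exists>e\<in>M. e \<subseteq> X)})"
    using M0 assms(1) by (intro of_nat_mono card_mono) auto
  finally show ?thesis
    by simp
qed

section \<open>Averaging\<close>

lemma sum_card_filter_swap:
  assumes "finite A" "finite B"
  shows "(\<Sum>x\<in>A. card {y\<in>B. P x y}) = (\<Sum>y\<in>B. card {x\<in>A. P x y})"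
proof -
  have "(\<Sum>x\<in>A. card {y\<in>B. P x y}) = (\<Sum>x\<in>A. \<Sum>y\<in>B. of_bool (P x y))"
    using assms by (simp add: Int_def)
  also have "\<dots> = (\<Sum>y\<in>B. \<Sum>x\<in>A. of_bool (P x y))"
    by (rule sum.swap)
  also have "\<dots> = (\<Sum>y\<in>B. card {x\<in>A. P x y})"
    using assms by (simp add: Int_def)
  finally show ?thesis .
qed

lemma exists_column_by_double_counting:
  fixes c :: real
  assumes "finite I" "finite K" "K \<noteq> {}"
    and "\<And>i. i \<in> I \<Longrightarrow> c * real (card K) \<le> real (card {X\<in>K. R i X})"
  shows "\<exists>X\<in>K. c * real (card I) \<le> real (card {i\<in>I. R i X})"
proof (rule ccontr)
  assume "\<not> ?thesis"
  then have "\<And>X. X \<in> K \<Longrightarrow> real (card {i\<in>I. R i X}) < c * real (card I)"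
    by (simp add: not_le)
  then have "(\<Sum>X\<in>K. real (card {i\<in>I. R i X})) < (\<Sum>X\<in>K. c * real (card I))"
    by (rule sum_strict_mono[OF assms(2,3)])
  also have "\<dots> = (\<Sum>i\<in>I. c * real (card K))"
    by simp
  also have "\<dots> \<le> (\<Sum>i\<in>I. real (card {X\<in>K. R i X}))"
    using assms(4) by (rule sum_mono)
  also have "\<dots> = real (\<Sum>i\<in>I. card {X\<in>K. R i X})"
    by (simp only: of_nat_sum)
  also have "\<dots> = real (\<Sum>X\<in>K. card {i\<in>I. R i X})"
    by (simp only: sum_card_filter_swap[OF assms(1,2)])
  also have "\<dots> = (\<Sum>X\<in>K. real (card {i\<in>I. R i X}))"
    by (simp only: of_nat_sum)
  finally show False
    by simp
qed

lemma card_large_values_ge: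
  fixes f :: "'i \<Rightarrow> real"
  assumes "finite S" "0 < N" "0 \<le> \<rho>" "\<rho> < 1" "\<forall>i\<in>S. f i \<le> N"
    and "N * ((1 - \<rho>) * real (card S)) \<le> (\<Sum>i\<in>S. f i)"
  shows "(1 - \<rho>) / (2 - \<rho>) * real (card S) \<le> real (card {i\<in>S. (1 - \<rho>)^2 * N \<le> f i})"
proof -
  define G where "G = {i\<in>S. (1 - \<rho>)^2 * N \<le> f i}"
  have G: "G \<subseteq> S" "finite G"
    using assms(1) unfolding G_def by auto
  show ?thesis
  proof (cases "G = S")
    case True
    have "(1 - \<rho>) / (2 - \<rho>) * real (card S) \<le> real (card S)"
      using assms(3,4) by (intro mult_left_le_one_le) auto
    then show ?thesis
      unfolding G_def[symmetric] using True by simp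
  next
    case False
    have "(\<Sum>i\<in>S. f i) = (\<Sum>i\<in>S - G. f i) + (\<Sum>i\<in>G. f i)"
      using G(1) assms(1) by (rule sum.subset_diff)
    also have "\<dots> < (\<Sum>i\<in>S - G. (1 - \<rho>)^2 * N) + (\<Sum>i\<in>G. N)"
    proof (rule add_less_le_mono)
      show "(\<Sum>i\<in>S - G. f i) < (\<Sum>i\<in>S - G. (1 - \<rho>)^2 * N)"
        using False G assms(1) unfolding G_def by (intro sum_strict_mono) auto
      show "(\<Sum>i\<in>G. f i) \<le> (\<Sum>i\<in>G. N)"
        using G assms(5) by (intro sum_mono) auto
    qed
    also have "\<dots> = N * ((real (card S) - real (card G)) * (1 - \<rho>)^2 + real (card G))"
    proof -
      have "real (card (S - G)) = real (card S) - real (card G)"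
        using G assms(1) by (simp add: card_Diff_subset card_mono of_nat_diff)
      then show ?thesis
        by (simp only: sum_constant) (simp add: algebra_simps)
    qed
    finally have "N * ((1 - \<rho>) * real (card S)) < N * ((real (card S) - real (card G)) * (1 - \<rho>)^2 + real (card G))"
      using assms(6) by linarith
    then have "(1 - \<rho>) * real (card S) < (real (card S) - real (card G)) * (1 - \<rho>)^2 + real (card G)"
      using assms(2) by (metis mult_less_cancel_left_pos)
    then have "\<rho> * ((1 - \<rho>) * real (card S)) < \<rho> * ((2 - \<rho>) * real (card G))"
      by (simp add: power2_eq_square algebra_simps)
    moreover from this have "0 < \<rho>"
      using assms(3) by (cases "\<rho> = 0") auto
    ultimately have "(1 - \<rho>) * real (card S) < (2 - \<rho>) * real (card G)"
      by simp
    then have "(1 - \<rho>) * real (card S) / (2 - \<rho>) \<le> real (card G)"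
      using assms(4) by (simp add: pos_divide_le_eq mult.commute)
    then show ?thesis
      unfolding G_def[symmetric] by simp
  qed
qed

lemma card_high_agreement_coordinates_ge:
  fixes E :: "('i \<Rightarrow> 'v) set" and A :: "'i \<Rightarrow> 'v set"
  assumes "finite S" "finite E" "E \<noteq> {}" "0 \<le> \<rho>" "\<rho> < 1"
    and "\<forall>c\<in>E. real (card {i\<in>S. c i \<notin> A i}) \<le> \<rho> * real (card S)"
  shows "(1 - \<rho>) / (2 - \<rho>) * real (card S)
    \<le> real (card {i\<in>S. (1 - \<rho>)^2 * real (card E) \<le> real (card {c\<in>E. c i \<in> A i})})"
proof -
  have agree: "(1 - \<rho>) * real (card S) \<le> real (card {i\<in>S. c i \<in> A i})" if "c \<in> E" for c
  proof -
    have "card {i\<in>S. c i \<in> A i} + card {i\<in>S. c i \<notin> A i} = card S"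
      using assms(1) by (subst card_Un_disjoint[symmetric]) (auto intro: arg_cong[where f = card])
    then have "real (card {i\<in>S. c i \<in> A i}) + real (card {i\<in>S. c i \<notin> A i}) = real (card S)"
      by (metis of_nat_add)
    moreover have "(1 - \<rho>) * real (card S) = real (card S) - \<rho> * real (card S)"
      by (simp add: algebra_simps)
    ultimately show ?thesis
      using assms(6) that by fastforce
  qed
  have "real (card E) * ((1 - \<rho>) * real (card S)) = (\<Sum>c\<in>E. (1 - \<rho>) * real (card S))"
    by simp
  also have "\<dots> \<le> (\<Sum>c\<in>E. real (card {i\<in>S. c i \<in> A i}))"
    using agree by (rule sum_mono)
  also have "\<dots> = real (\<Sum>c\<in>E. card {i\<in>S. c i \<in> A i})"
    by (simp only: of_nat_sum)
  also have "\<dots> = real (\<Sum>i\<in>S. card {c\<in>E. c i \<in> A i})"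
    by (simp only: sum_card_filter_swap[OF assms(2,1)])
  also have "\<dots> = (\<Sum>i\<in>S. real (card {c\<in>E. c i \<in> A i}))"
    by (simp only: of_nat_sum)
  finally have "real (card E) * ((1 - \<rho>) * real (card S)) \<le> (\<Sum>i\<in>S. real (card {c\<in>E. c i \<in> A i}))" .
  moreover have "\<forall>i\<in>S. real (card {c\<in>E. c i \<in> A i}) \<le> real (card E)"
    using assms(2) by (simp add: card_mono)
  moreover have "0 < real (card E)"
    using assms(2,3) by (simp add: card_gt_0_iff)
  ultimately show ?thesis
    using card_large_values_ge[OF assms(1), of "real (card E)" \<rho> "\<lambda>i. real (card {c\<in>E. c i \<in> A i})"] assms(4,5)
    by simp
qed

lemma T_set_memI:
  assumes "collision_matching (\<lambda>x. x i) D M" "e \<in> M" "e \<subseteq> X" "i \<in> S"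
  shows "i \<in> T_set S X"
proof -
  obtain x y where "e = {x, y}" "x \<noteq> y" "x i = y i"
    using collision_matching_memE[OF assms(1,2)] by blast
  then show ?thesis
    using assms(3,4) unfolding T_set_def by blast
qed

text \<open>For every \<open>i \<in> G\<close> at least a quarter of the \<open>k\<close>-subsets of \<open>D\<close> contain a pair
  colliding at \<open>i\<close>; double counting yields one \<open>k\<close>-subset that works for a quarter of \<open>G\<close>.\<close>

lemma exists_k_subset_large_T_set:
  fixes D :: "(nat \<Rightarrow> nat) set"
  assumes "finite S" "finite D" "G \<subseteq> S" "4 \<le> k" "k \<le> card D"
    and "\<And>i. i \<in> G \<Longrightarrow>
      \<exists>M. collision_matching (\<lambda>x. x i) D M \<and> 1 / 2 \<le> real (card M) * pair_prob (card D) k"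
  shows "\<exists>X\<subseteq>D. card X = k \<and> real (card G) \<le> 4 * real (card (T_set S X))"
proof -
  define KK where "KK = {X. X \<subseteq> D \<and> card X = k}"
  have card_KK: "card KK = card D choose k"
    unfolding KK_def using assms(2) by (rule n_subsets)
  have "finite KK"
    unfolding KK_def using assms(2) by simp
  moreover have "KK \<noteq> {}"
    using card_KK assms(5) by (intro notI) simp
  moreover have "1 / 4 * real (card KK) \<le> real (card {X\<in>KK. i \<in> T_set S X})" if "i \<in> G" for i
  proof -
    obtain M where M: "collision_matching (\<lambda>x. x i) D M" "1 / 2 \<le> real (card M) * pair_prob (card D) k"
      using assms(6) \<open>i \<in> G\<close> by blast
    have "e \<subseteq> D \<and> card e = 2" if "e \<in> M" for e
      using collision_matching_memE[OF M(1) that] by (metis card_2_iff)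
    moreover have "finite M" "pairwise disjnt M"
      using M(1) by (simp_all add: collision_matching_def)
    ultimately have "real (card D choose k) \<le> 4 * real (card {X. X \<subseteq> D \<and> card X = k \<and> (\<exists>e\<in>M. e \<subseteq> X)})"
      using card_subsets_containing_pair_ge[OF assms(2,4,5) _ _ _ M(2)] by blast
    also have "\<dots> \<le> 4 * real (card {X\<in>KK. i \<in> T_set S X})"
    proof -
      have "{X. X \<subseteq> D \<and> card X = k \<and> (\<exists>e\<in>M. e \<subseteq> X)} \<subseteq> {X\<in>KK. i \<in> T_set S X}"
        unfolding KK_def using T_set_memI[OF M(1)] \<open>i \<in> G\<close> assms(3) by blast
      then show ?thesis
        using \<open>finite KK\<close> by (simp add: card_mono)
    qed
    finally show ?thesis
      unfolding card_KK by simp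
  qed
  moreover have "finite G"
    using assms(1,3) finite_subset by blast
  ultimately obtain X where "X \<in> KK" "1 / 4 * real (card G) \<le> real (card {i\<in>G. i \<in> T_set S X})"
    using exists_column_by_double_counting[of G KK "1 / 4" "\<lambda>i X. i \<in> T_set S X"] by blast
  moreover have "card {i\<in>G. i \<in> T_set S X} \<le> card (T_set S X)"
    using assms(1) unfolding T_set_def by (intro card_mono) auto
  ultimately show ?thesis
    unfolding KK_def by (intro exI[of _ X]) auto
qed

lemma exists_small_subset_large_T_set:
  fixes D :: "(nat \<Rightarrow> nat) set" and c :: real
  assumes "finite S" "finite D" "G \<subseteq> S" "4 \<le> k"
    and "real (card D) * (real (card D) - 1) \<le> c * (real k * (real k - 1))"
    and "\<And>i. i \<in> G \<Longrightarrow> \<exists>M. collision_matching (\<lambda>x. x i) D M \<and> c < 2 * real (card M)"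
  shows "\<exists>X\<subseteq>D. card X \<le> k \<and> real (card G) \<le> 4 * real (card (T_set S X))"
proof (cases "card D \<le> k")
  case True
  have "G \<subseteq> T_set S D"
  proof
    fix i assume "i \<in> G"
    then obtain M where M: "collision_matching (\<lambda>x. x i) D M" "c < 2 * real (card M)"
      using assms(6) by blast
    have "0 \<le> real (card D) * (real (card D) - 1)"
      by (cases "card D") simp_all
    then have "0 \<le> c * (real k * (real k - 1))"
      using assms(5) by linarith
    moreover have "0 < real k * (real k - 1)"
      using assms(4) by simp
    ultimately have "0 \<le> c"
      by (simp add: zero_le_mult_iff)
    then have "M \<noteq> {}"
      using M(2) by (intro notI) simp
    then obtain e where "e \<in> M"
      by blast
    moreover have "e \<subseteq> D"
      using collision_matching_memE[OF M(1) \<open>e \<in> M\<close>] by blast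
    ultimately show "i \<in> T_set S D"
      using T_set_memI[OF M(1)] \<open>i \<in> G\<close> assms(3) by blast
  qed
  then have "card G \<le> card (T_set S D)"
    using assms(1) unfolding T_set_def by (intro card_mono) auto
  then show ?thesis
    using True by (intro exI[of _ D]) simp
next
  case False
  have "\<exists>M. collision_matching (\<lambda>x. x i) D M \<and> 1 / 2 \<le> real (card M) * pair_prob (card D) k"
    if i: "i \<in> G" for i
  proof -
    obtain M where M: "collision_matching (\<lambda>x. x i) D M" "c < 2 * real (card M)"
      using assms(6) i by blast
    have "c * (real k * (real k - 1)) \<le> 2 * real (card M) * (real k * (real k - 1))"
      using M(2) assms(4) by (intro mult_right_mono) auto
    moreover have "0 < real (card D) * (real (card D) - 1)"
      using False assms(4) by simp
    ultimately have "1 / 2 \<le> real (card M) * pair_prob (card D) k"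
      unfolding pair_prob_def using assms(5) by (simp add: field_simps)
    then show ?thesis
      using M(1) by blast
  qed
  moreover have "k \<le> card D"
    using False by simp
  ultimately obtain X where "X \<subseteq> D" "card X = k" "real (card G) \<le> 4 * real (card (T_set S X))"
    using exists_k_subset_large_T_set[OF assms(1-4)] by blast
  then show ?thesis
    by auto
qed

section \<open>The list-recovery setting\<close>

lemma not_list_recoverableE:
  assumes "\<not> list_recoverable q S D \<rho> l L" "0 \<le> L" "L < real K"
  obtains A E where "\<forall>i\<in>S. finite (A i) \<and> card (A i) \<le> l"
    and "E \<subseteq> D" "finite E" "L < real (card E)" "card E \<le> K"
    and "\<forall>c\<in>E. real (card {i\<in>S. c i \<notin> A i}) \<le> \<rho> * real (card S)"
proof -
  obtain A where A: "\<forall>i\<in>S. A i \<subseteq> {..<q} \<and> card (A i) \<le> l"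
    and not_few: "\<not> real (card {c\<in>D. real (card {i\<in>S. c i \<notin> A i}) \<le> \<rho> * real (card S)}) \<le> L"
    using assms(1) unfolding list_recoverable_def by blast
  define Close where "Close = {c\<in>D. real (card {i\<in>S. c i \<notin> A i}) \<le> \<rho> * real (card S)}"
  have many: "L < real (card Close)"
    using not_few unfolding Close_def by linarith
  then have "finite Close"
    using assms(2) card.infinite by fastforce
  obtain E where E: "E \<subseteq> Close" "card E = min (card Close) K"
    using obtain_subset_with_card_n[of "min (card Close) K" Close] by auto
  show thesis
  proof (rule that)
    show "\<forall>i\<in>S. finite (A i) \<and> card (A i) \<le> l"
      using A finite_subset by blast
    show "E \<subseteq> D" "finite E" "\<forall>c\<in>E. real (card {i\<in>S. c i \<notin> A i}) \<le> \<rho> * real (card S)"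
      using E(1) \<open>finite Close\<close> finite_subset unfolding Close_def by auto
    show "L < real (card E)" "card E \<le> K"
      using E(2) many assms(3) by auto
  qed
qed

lemma gamma_bounds:
  fixes \<alpha> \<rho> :: real
  assumes "0 < \<alpha>" "\<alpha> < 1" "0 \<le> \<rho>" "\<rho> < 1 - (1 + \<alpha>) powr (-1/2)"
  shows "0 < (1 + \<alpha>) * (1 - \<rho>)^2 - 1" "(1 + \<alpha>) * (1 - \<rho>)^2 - 1 < 1" "\<rho> < 1"
proof -
  define w where "w = (1 + \<alpha>) powr (-1/2)"
  have w_pos: "0 < w"
    unfolding w_def using assms(1) by simp
  have "w^2 = (1 + \<alpha>) powr (-1)"
    unfolding w_def using assms(1) by (simp add: powr_powr flip: powr_realpow)
  then have w_sq: "w^2 * (1 + \<alpha>) = 1"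
    using assms(1) by (simp add: powr_minus field_simps)
  have "w < 1 - \<rho>"
    using assms(4) unfolding w_def by linarith
  then have "w^2 < (1 - \<rho>)^2"
    using w_pos by (intro power_strict_mono) auto
  then have "w^2 * (1 + \<alpha>) < (1 - \<rho>)^2 * (1 + \<alpha>)"
    using assms(1) by (intro mult_strict_right_mono) auto
  then show "0 < (1 + \<alpha>) * (1 - \<rho>)^2 - 1"
    using w_sq by (simp add: mult.commute)
  show "\<rho> < 1"
    using \<open>w < 1 - \<rho>\<close> w_pos by linarith
  then have "(1 - \<rho>)^2 \<le> 1"
    using assms(3) by (simp add: power_le_one)
  then have "(1 + \<alpha>) * (1 - \<rho>)^2 \<le> 1 + \<alpha>"
    using assms(1) by (simp add: mult_left_le)
  then show "(1 + \<alpha>) * (1 - \<rho>)^2 - 1 < 1"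
    using assms(2) by linarith
qed

lemma exists_sample_size:
  fixes \<gamma> :: real
  assumes "0 < \<gamma>" "\<gamma> < 1" "4 / \<gamma> \<le> real l" "N \<le> 2 * l"
  shows "\<exists>k. 4 \<le> k \<and> real k \<le> 10 * sqrt (real l / \<gamma>)
    \<and> real N * (real N - 1) \<le> \<gamma> * real l * (real k * (real k - 1))"
proof -
  define s where "s = sqrt (real l / \<gamma>)"
  have "4 \<le> real l * \<gamma>"
    using assms(1,3) by (simp add: field_simps)
  moreover have "real l * \<gamma> \<le> real l"
    using assms(1,2) by (simp add: mult_left_le)
  ultimately have "4 \<le> real l / \<gamma>"
    using assms(1,2) by (simp add: field_simps)
  then have s_ge: "2 \<le> s" and s_sq: "s^2 = real l / \<gamma>"
    unfolding s_def using real_sqrt_le_mono[of 4 "real l / \<gamma>"] by auto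
  define k where "k = nat \<lceil>2 * s\<rceil> + 1"
  have k_ge: "2 * s \<le> real k - 1" and k_le: "real k \<le> 2 * s + 2"
    unfolding k_def using s_ge by linarith+
  have "(2 * s) * (2 * s) \<le> real k * (real k - 1)"
    using k_ge s_ge by (intro mult_mono) auto
  then have "4 * s^2 \<le> real k * (real k - 1)"
    by (simp add: power2_eq_square)
  then have "\<gamma> * real l * (4 * s^2) \<le> \<gamma> * real l * (real k * (real k - 1))"
    using assms(1) by (intro mult_left_mono) auto
  moreover have "\<gamma> * real l * (4 * s^2) = 2 * real l * (2 * real l)"
    unfolding s_sq using assms(1) by simp
  moreover have "real N * (real N - 1) \<le> real N * real N"
    by (simp add: mult_left_mono)
  moreover have "real N * real N \<le> 2 * real l * (2 * real l)"
    using assms(4) by (intro mult_mono) auto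
  ultimately have "real N * (real N - 1) \<le> \<gamma> * real l * (real k * (real k - 1))"
    by linarith
  moreover have "4 \<le> k"
  proof -
    have "4 \<le> \<lceil>2 * s\<rceil>"
      using s_ge by (simp add: le_ceiling_iff)
    then show ?thesis
      unfolding k_def by linarith
  qed
  moreover have "real k \<le> 10 * sqrt (real l / \<gamma>)"
    using k_le s_ge unfolding s_def by linarith
  ultimately show ?thesis
    by blast
qed

lemma exists_coordinates_with_large_collision_matchings:
  fixes E :: "(nat \<Rightarrow> nat) set" and A :: "nat \<Rightarrow> nat set"
  assumes "finite S" "finite E" "0 \<le> \<rho>" "\<rho> < 1" "0 \<le> real l * (1 + \<alpha>)"
    and "real l * (1 + \<alpha>) < real (card E)" "\<forall>i\<in>S. finite (A i) \<and> card (A i) \<le> l"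
    and "\<forall>c\<in>E. real (card {i\<in>S. c i \<notin> A i}) \<le> \<rho> * real (card S)"
    and "\<gamma> = (1 + \<alpha>) * (1 - \<rho>)^2 - 1"
  shows "\<exists>G\<subseteq>S. (1 - \<rho>) / (2 - \<rho>) * real (card S) \<le> real (card G)
    \<and> (\<forall>i\<in>G. \<exists>M. collision_matching (\<lambda>c. c i) E M \<and> \<gamma> * real l < 2 * real (card M))"
proof -
  define G where "G = {i\<in>S. (1 - \<rho>)^2 * real (card E) \<le> real (card {c\<in>E. c i \<in> A i})}"
  have "E \<noteq> {}"
    using assms(5,6) by auto
  then have "(1 - \<rho>) / (2 - \<rho>) * real (card S) \<le> real (card G)"
    unfolding G_def by (rule card_high_agreement_coordinates_ge[OF assms(1,2) _ assms(3,4,8)])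
  moreover have "\<exists>M. collision_matching (\<lambda>c. c i) E M \<and> \<gamma> * real l < 2 * real (card M)"
    if "i \<in> G" for i
  proof (rule exists_large_collision_matching[OF assms(2), where B = "A i"])
    show "finite (A i)" "card (A i) \<le> l"
      using assms(7) that unfolding G_def by auto
    have "(1 + \<gamma>) * real l = (1 - \<rho>)^2 * (real l * (1 + \<alpha>))"
      using assms(9) by (simp add: algebra_simps)
    also have "\<dots> < (1 - \<rho>)^2 * real (card E)"
      using assms(4,6) by (intro mult_strict_left_mono) auto
    also have "\<dots> \<le> real (card {c\<in>E. c i \<in> A i})"
      using that unfolding G_def by blast
    finally show "(1 + \<gamma>) * real l < real (card {c\<in>E. c i \<in> A i})" .
  qed
  moreover have "G \<subseteq> S"
    unfolding G_def by blast
  ultimately show ?thesis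
    by (intro exI[of _ G]) blast
qed

theorem mainTheorem3:
  fixes \<alpha> \<rho> \<gamma> \<sigma> :: real and l q n m :: nat
    and C :: "(nat \<Rightarrow> nat) set" and S :: "nat set"
  assumes "0 < \<alpha>" "\<alpha> < 1"
    and "0 \<le> \<rho>" "\<rho> < 1 - (1 + \<alpha>) powr (-1/2)"
    and "\<gamma> = (1 + \<alpha>) * (1 - \<rho>)^2 - 1"
    and "\<sigma> = (1 - \<rho>) / (2 - \<rho>)"
    and "0 < l" "real l \<ge> 4 / \<gamma>"
    and "code q n C"
    and "S \<subseteq> {..<n}" "card S = m"
    and "\<not> list_recoverable q S (puncture C S) \<rho> l (real l * (1 + \<alpha>))"
  shows "\<exists>C' \<subseteq> puncture C S. real (card C') \<le> 10 * sqrt (real l / \<gamma>)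
           \<and> real (card (T_set S C')) \<ge> \<sigma> * real m / 4"
proof -
  have \<gamma>: "0 < \<gamma>" "\<gamma> < 1" "\<rho> < 1"
    using gamma_bounds[OF assms(1-4)] assms(5) by auto
  have finite_S: "finite S"
    using assms(10) finite_subset by blast
  have list_size: "0 \<le> real l * (1 + \<alpha>)" "real l * (1 + \<alpha>) < real (2 * l)"
    using assms(1,2,7) by auto
  obtain A E where A: "\<forall>i\<in>S. finite (A i) \<and> card (A i) \<le> l"
    and E: "E \<subseteq> puncture C S" "finite E" "real l * (1 + \<alpha>) < real (card E)" "card E \<le> 2 * l"
    and close: "\<forall>c\<in>E. real (card {i\<in>S. c i \<notin> A i}) \<le> \<rho> * real (card S)"
    by (rule not_list_recoverableE[OF assms(12) list_size])
  obtain G where G: "G \<subseteq> S" "(1 - \<rho>) / (2 - \<rho>) * real (card S) \<le> real (card G)"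
    and matching: "\<forall>i\<in>G. \<exists>M. collision_matching (\<lambda>c. c i) E M \<and> \<gamma> * real l < 2 * real (card M)"
    using exists_coordinates_with_large_collision_matchings[OF finite_S E(2) assms(3) \<gamma>(3) list_size(1)
        E(3) A close assms(5)]
    by blast
  obtain k where k: "4 \<le> k" "real k \<le> 10 * sqrt (real l / \<gamma>)"
    "real (card E) * (real (card E) - 1) \<le> \<gamma> * real l * (real k * (real k - 1))"
    using exists_sample_size[OF \<gamma>(1,2) assms(8) E(4)] by blast
  obtain X where X: "X \<subseteq> E" "card X \<le> k" "real (card G) \<le> 4 * real (card (T_set S X))"
    using exists_small_subset_large_T_set[OF finite_S E(2) G(1) k(1,3)] matching by blast
  have "\<sigma> * real m \<le> real (card G)"
    using G(2) assms(6,11) by simp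
  then have "\<sigma> * real m / 4 \<le> real (card (T_set S X))"
    using X(3) by linarith
  moreover have "real (card X) \<le> 10 * sqrt (real l / \<gamma>)"
    using X(2) k(2) by linarith
  ultimately show ?thesis
    using X(1) E(1) by blast
qed

end
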